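(* Let $f$ be $\mu$-strongly quasi-convex around $x^\star$, and each $f_i$ be $L$-smooth and convex. Let $\{h^i\}_{i\in[n]}$ be such that $\frac{1}{n}\sum_{i=1}^{n}\mathbb{E}\left[\|h^i-\nabla f_i(x^\star)\|^2\right]\leq \alpha$, and let the stepsize be $\gamma \leq \frac{\delta }{8\sqrt{6}L}$. Then the iterates of EC-Approximate satisfy \[ \Psi_{t+1} \leq (1-c)\Psi_t-\frac{\gamma }{4}F_t+\gamma ^2\frac{\sigma^2}{n}+\gamma ^3\left( \frac{48L\alpha}{\delta ^2} + \frac{12L\sigma^2}{\delta} \right), \] where $\Psi_t = X_t + aE_t$, $a\coloneqq \frac{12L\gamma ^3}{\delta }$ and $c\coloneqq \frac{\gamma \mu}{2}$.
   Context: Setting: distributed optimization $f^\star=\min_{x\in\mathbb{R}^d} f(x)$, $f(x)=\frac1n\sum_{i=1}^n f_i(x)$, with minimizer $x^\star$. Each client $i$ has a stochastic gradient oracle $g^i(x)$ with $\mathbb{E}[g^i(x)]=\nabla f_i(x)$ and $\mathbb{E}\|g^i(x)-\nabla f_i(x)\|^2\le\sigma^2$. $\mathcal{C}_\delta$ is a contractive compressor: $\mathbb{E}\|\mathcal{C}_\delta(x)-x\|^2\le(1-\delta)\|x\|^2$ for all $x$, $0<\delta\le1$. $\mu$-strong quasi-convexity around $x^\star$ means $f(x^\star)\ge f(y)+\langle\nabla f(y),x^\star-y\rangle+\frac{\mu}{2}\|x^\star-y\|^2$ for all $y$. EC-Approximate: given fixed vectors $h^i$ and $h=\frac1n\sum_i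 h^i$, start from $x_0$, $e_0^i=0$; at each iteration client $i$ computes $g_t^i=g^i(x_t)$, $\hat\Delta_t^i=\mathcal{C}_\delta(e_t^i+g_t^i-h^i)$, $e_{t+1}^i=e_t^i+g_t^i-h^i-\hat\Delta_t^i$, sends $\hat\Delta_t^i$; the server updates $x_{t+1}=x_t-\gamma h-\frac{\gamma}{n}\sum_i\hat\Delta_t^i$. Notation: $F_t=\mathbb{E}[f(x_t)]-f^\star$, $E_t=\frac1n\sum_i\mathbb{E}\|e_t^i\|^2$, $X_t=\mathbb{E}\|\tilde x_t-x^\star\|^2$ where the virtual iterates are $\tilde x_0=x_0$, $\tilde x_{t+1}=\tilde x_t-\frac{\gamma}{n}\sum_i g_t^i$. *)

theory Defs
  imports "HOL-Analysis.Analysis" "HOL-Probability.Probability"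
begin

text \<open>Virtual iterates of EC-Approximate:
  tilde x_0 = x_0,  tilde x_{t+1} = tilde x_t - (gamma/n) * sum_i g_t^i.
  Here g i t w is the stochastic gradient of client i at iteration t, at sample point w.\<close>
fun virt_iter :: "nat \<Rightarrow> real \<Rightarrow> 'a::real_vector \<Rightarrow> (nat \<Rightarrow> nat \<Rightarrow> 'w \<Rightarrow> 'a) \<Rightarrow> nat \<Rightarrow> 'w \<Rightarrow> 'a" where
  "virt_iter n \<gamma> x0 g 0 w = x0"
| "virt_iter n \<gamma> x0 g (Suc t) w =
     virt_iter n \<gamma> x0 g t w - (\<gamma> / real n) *\<^sub>R (\<Sum>i<n. g i t w)"

definition strongly_quasi_convex_around ::
  "real \<Rightarrow> ('a::real_inner \<Rightarrow> real) \<Rightarrow> ('a \<Rightarrow> 'a) \<Rightarrow> 'a \<Rightarrow> bool" where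
  "strongly_quasi_convex_around \<mu> f df xs \<longleftrightarrow>
     (\<forall>y. f xs \<ge> f y + inner (df y) (xs - y) + \<mu> / 2 * (norm (xs - y))\<^sup>2)"

definition L_smooth :: "real \<Rightarrow> ('a::real_inner \<Rightarrow> real) \<Rightarrow> ('a \<Rightarrow> 'a) \<Rightarrow> bool" where
  "L_smooth L f df \<longleftrightarrow>
     (\<forall>x. (f has_derivative (\<lambda>v. inner (df x) v)) (at x)) \<and>
     (\<forall>x y. norm (df x - df y) \<le> L * norm (x - y))"

end

theory Submission
  imports Defs
begin

(* The virtual iterate x~_t = x_t - gamma ebar_t, with ebar_t the mean of the errors e^i_t,
   performs plain SGD, x~_{t+1} = x~_t - gamma gbar_t, except that the stochastic gradients are
   taken at the real iterate x_t = x~_t + gamma ebar_t.  Strong quasi-convexity and L-smoothness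
   give the usual contraction of E |x~_t - x*|^2, up to an extra 4 L gamma^3 E_t caused by this
   mismatch, while the noise only contributes gamma^2 sigma^2 / n since it is orthogonal to
   everything known before the step.  The contractive compressor gives
   E_{t+1} <= (1 - delta/2) E_t + (2/delta) avg_i E |grad f_i(x_t) - h^i|^2 + sigma^2, and
   cocoercivity of the convex smooth f_i bounds that average by 4 L F_t + 2 alpha.  Weighting E_t
   with a = 12 L gamma^3 / delta absorbs the mismatch term, and the stepsize bound leaves a descent
   of at least gamma/4 F_t. *)

section \<open>Smooth convex functions\<close>

lemma has_real_derivative_along_line:
  fixes \<phi> :: "'a::real_inner \<Rightarrow> real"
  assumes "(\<phi> has_derivative (\<lambda>u. inner d u)) (at (x + t *\<^sub>R v))"
  shows "((\<lambda>s. \<phi> (x + s *\<^sub>R v)) has_real_derivative inner d v) (at t)"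
proof -
  have "((\<lambda>s. x + s *\<^sub>R v) has_derivative (\<lambda>s. s *\<^sub>R v)) (at t)"
    by (auto intro!: derivative_eq_intros)
  from has_derivative_compose[OF this assms]
  have "((\<lambda>s. \<phi> (x + s *\<^sub>R v)) has_derivative (\<lambda>s. inner d (s *\<^sub>R v))) (at t)"
    by (simp add: o_def)
  moreover have "(\<lambda>s. inner d (s *\<^sub>R v)) = (*) (inner d v)"
    by (rule ext) simp
  ultimately show ?thesis
    unfolding has_field_derivative_def by simp
qed

lemma L_smooth_upper_bound:
  fixes \<phi> :: "'a::real_inner \<Rightarrow> real"
  assumes "L_smooth L \<phi> d\<phi>"
  shows "\<phi> y \<le> \<phi> x + inner (d\<phi> x) (y - x) + L / 2 * (norm (y - x))\<^sup>2"
proof -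
  have der: "\<And>z. (\<phi> has_derivative (\<lambda>u. inner (d\<phi> z) u)) (at z)"
    and lip: "\<And>z z'. norm (d\<phi> z - d\<phi> z') \<le> L * norm (z - z')"
    using assms unfolding L_smooth_def by auto
  define v where "v = y - x"
  define \<psi> where "\<psi> = (\<lambda>t. \<phi> (x + t *\<^sub>R v) - t * inner (d\<phi> x) v - L / 2 * t\<^sup>2 * (norm v)\<^sup>2)"
  have \<psi>_deriv: "(\<psi> has_real_derivative
      (inner (d\<phi> (x + t *\<^sub>R v)) v - inner (d\<phi> x) v - L * t * (norm v)\<^sup>2)) (at t)" for t
    unfolding \<psi>_def
    by (rule derivative_eq_intros has_real_derivative_along_line[OF der] | simp)+
  have "\<psi> 1 \<le> \<psi> 0"
  proof (rule DERIV_nonpos_imp_nonincreasing[of 0 1 \<psi>])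
    fix t :: real assume t: "0 \<le> t" "t \<le> 1"
    have "inner (d\<phi> (x + t *\<^sub>R v)) v - inner (d\<phi> x) v = inner (d\<phi> (x + t *\<^sub>R v) - d\<phi> x) v"
      by (simp add: inner_diff_left)
    also have "\<dots> \<le> norm (d\<phi> (x + t *\<^sub>R v) - d\<phi> x) * norm v"
      by (rule norm_cauchy_schwarz)
    also have "\<dots> \<le> L * norm (t *\<^sub>R v) * norm v"
      using lip[of "x + t *\<^sub>R v" x] by (intro mult_right_mono) auto
    also have "\<dots> = L * t * (norm v)\<^sup>2"
      using t by (simp add: power2_eq_square)
    finally show "\<exists>y. DERIV \<psi> t :> y \<and> y \<le> 0"
      using \<psi>_deriv[of t] by auto
  qed auto
  then show ?thesis
    unfolding \<psi>_def v_def by simp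
qed

lemma convex_on_gradient_inequality:
  fixes \<phi> :: "'a::real_inner \<Rightarrow> real"
  assumes cvx: "convex_on UNIV \<phi>"
    and der: "(\<phi> has_derivative (\<lambda>u. inner d u)) (at x)"
  shows "\<phi> x + inner d (y - x) \<le> \<phi> y"
proof -
  define v where "v = y - x"
  define \<psi> where "\<psi> = (\<lambda>t. \<phi> (x + t *\<^sub>R v))"
  have "convex_on UNIV \<psi>"
  proof (rule convex_onI)
    fix t a b :: real assume t: "0 < t" "t < 1"
    have "x + ((1 - t) *\<^sub>R a + t *\<^sub>R b) *\<^sub>R v = (1 - t) *\<^sub>R (x + a *\<^sub>R v) + t *\<^sub>R (x + b *\<^sub>R v)"
      by (simp add: algebra_simps)
    then show "\<psi> ((1 - t) *\<^sub>R a + t *\<^sub>R b) \<le> (1 - t) * \<psi> a + t * \<psi> b"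
      unfolding \<psi>_def using convex_onD[OF cvx, of t "x + a *\<^sub>R v" "x + b *\<^sub>R v"] t by simp
  qed simp
  moreover have "(\<psi> has_real_derivative inner d v) (at 0)"
    unfolding \<psi>_def by (rule has_real_derivative_along_line) (use der in simp)
  ultimately have "inner d v * (1 - 0) \<le> \<psi> 1 - \<psi> 0"
    by (intro convex_on_imp_above_tangent) auto
  then show ?thesis
    unfolding \<psi>_def v_def by simp
qed

lemma L_smooth_convex_cocoercive:
  fixes \<phi> :: "'a::real_inner \<Rightarrow> real"
  assumes smooth: "L_smooth L \<phi> d\<phi>" and cvx: "convex_on UNIV \<phi>" and L: "L > 0"
  shows "(norm (d\<phi> x - d\<phi> y))\<^sup>2 \<le> 2 * L * (\<phi> x - \<phi> y - inner (d\<phi> y) (x - y))"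
proof -
  \<comment> \<open>The tilted function \<open>\<psi>\<close> is convex, \<open>L\<close>-smooth and minimal at \<open>y\<close>, so
    \<open>\<psi> y \<le> \<psi> (x - d\<psi> x / L) \<le> \<psi> x - \<parallel>d\<psi> x\<parallel>\<^sup>2 / 2L\<close>.\<close>
  define \<psi> where "\<psi> = (\<lambda>z. \<phi> z - inner (d\<phi> y) z)"
  define d\<psi> where "d\<psi> = (\<lambda>z. d\<phi> z - d\<phi> y)"
  have \<psi>_deriv: "(\<psi> has_derivative (\<lambda>u. inner (d\<psi> z) u)) (at z)" for z
  proof -
    have "(\<phi> has_derivative (\<lambda>u. inner (d\<phi> z) u)) (at z)"
      using smooth unfolding L_smooth_def by blast
    then have "(\<psi> has_derivative (\<lambda>u. inner (d\<phi> z) u - inner (d\<phi> y) u)) (at z)"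
      unfolding \<psi>_def by (auto intro!: derivative_eq_intros)
    then show ?thesis
      unfolding d\<psi>_def by (simp add: inner_diff_left)
  qed
  have \<psi>_smooth: "L_smooth L \<psi> d\<psi>"
    using smooth \<psi>_deriv unfolding L_smooth_def d\<psi>_def by auto
  have "convex_on UNIV \<psi>"
  proof (rule convex_onI)
    fix t :: real and a b assume "0 < t" "t < 1"
    then show "\<psi> ((1 - t) *\<^sub>R a + t *\<^sub>R b) \<le> (1 - t) * \<psi> a + t * \<psi> b"
      unfolding \<psi>_def using convex_onD[OF cvx, of t a b]
      by (simp add: inner_add_right algebra_simps)
  qed simp
  then have \<psi>_min: "\<psi> y \<le> \<psi> z" for z
    using convex_on_gradient_inequality[OF _ \<psi>_deriv[of y], of z] by (simp add: d\<psi>_def)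
  define z where "z = x - (1 / L) *\<^sub>R d\<psi> x"
  have "\<psi> z \<le> \<psi> x + inner (d\<psi> x) (z - x) + L / 2 * (norm (z - x))\<^sup>2"
    by (rule L_smooth_upper_bound[OF \<psi>_smooth])
  also have "\<dots> = \<psi> x - (norm (d\<psi> x))\<^sup>2 / (2 * L)"
    unfolding z_def using L
    by (simp add: dot_square_norm power_mult_distrib power2_eq_square field_simps)
  finally have "(norm (d\<psi> x))\<^sup>2 / (2 * L) \<le> \<psi> x - \<psi> y"
    using \<psi>_min[of z] by linarith
  then have "(norm (d\<psi> x))\<^sup>2 \<le> 2 * L * (\<psi> x - \<psi> y)"
    using L by (simp add: field_simps)
  then show ?thesis
    unfolding d\<psi>_def \<psi>_def by (simp add: inner_diff_right algebra_simps)
qed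

lemma L_smooth_gradient_eq_0_at_minimum:
  fixes \<phi> :: "'a::real_inner \<Rightarrow> real"
  assumes "L_smooth L \<phi> d\<phi>" and min: "\<And>y. \<phi> xs \<le> \<phi> y"
  shows "d\<phi> xs = 0"
proof -
  have "(\<phi> has_derivative (\<lambda>u. inner (d\<phi> xs) u)) (at xs)"
    using assms unfolding L_smooth_def by blast
  then have "(\<lambda>u. inner (d\<phi> xs) u) = (\<lambda>u. 0)"
    using min by (intro differential_zero_maxmin[of xs UNIV]) auto
  then have "inner (d\<phi> xs) (d\<phi> xs) = 0"
    by meson
  then show ?thesis
    by simp
qed

lemma L_smooth_continuous_gradient:
  assumes "L_smooth L \<phi> d\<phi>" "0 \<le> L"
  shows "continuous_on UNIV d\<phi>"
  using assms unfolding L_smooth_def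
  by (intro lipschitz_on_continuous_on[of L] lipschitz_onI) (auto simp: dist_norm)

lemma L_smooth_continuous:
  assumes "L_smooth L \<phi> d\<phi>"
  shows "continuous_on UNIV \<phi>"
  using assms unfolding L_smooth_def
  by (meson has_derivative_continuous continuous_at_imp_continuous_on)

lemma L_smooth_average:
  fixes fi :: "nat \<Rightarrow> 'a::real_inner \<Rightarrow> real"
  assumes n: "n \<ge> 1" and smooth: "\<And>i. i < n \<Longrightarrow> L_smooth L (fi i) (dfi i)"
  shows "L_smooth L (\<lambda>y. (1 / real n) * (\<Sum>i<n. fi i y)) (\<lambda>y. (1 / real n) *\<^sub>R (\<Sum>i<n. dfi i y))"
  unfolding L_smooth_def
proof safe
  fix y
  have "((\<lambda>y. (1 / real n) * (\<Sum>i<n. fi i y)) has_derivative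
      (\<lambda>u. (1 / real n) * (\<Sum>i<n. inner (dfi i y) u))) (at y)"
    using smooth unfolding L_smooth_def
    by (intro has_derivative_mult_right has_derivative_sum) auto
  then show "((\<lambda>y. (1 / real n) * (\<Sum>i<n. fi i y)) has_derivative
      (\<lambda>u. inner ((1 / real n) *\<^sub>R (\<Sum>i<n. dfi i y)) u)) (at y)"
    by (simp add: inner_sum_left)
next
  fix y z
  have "norm ((1 / real n) *\<^sub>R (\<Sum>i<n. dfi i y) - (1 / real n) *\<^sub>R (\<Sum>i<n. dfi i z))
      = (1 / real n) * norm (\<Sum>i<n. dfi i y - dfi i z)"
    by (simp add: sum_subtractf flip: scaleR_diff_right)
  also have "\<dots> \<le> (1 / real n) * (\<Sum>i<n. norm (dfi i y - dfi i z))"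
    by (intro mult_left_mono norm_sum) auto
  also have "\<dots> \<le> (1 / real n) * (\<Sum>i<n. L * norm (y - z))"
    using smooth unfolding L_smooth_def by (intro mult_left_mono sum_mono) auto
  also have "\<dots> = L * norm (y - z)"
    using n by simp
  finally show "norm ((1 / real n) *\<^sub>R (\<Sum>i<n. dfi i y) - (1 / real n) *\<^sub>R (\<Sum>i<n. dfi i z))
      \<le> L * norm (y - z)" .
qed

section \<open>Square-integrable random vectors\<close>

definition square_integrable :: "'w measure \<Rightarrow> ('w \<Rightarrow> 'a::euclidean_space) \<Rightarrow> bool" where
  "square_integrable M u \<longleftrightarrow> u \<in> borel_measurable M \<and> integrable M (\<lambda>w. (norm (u w))\<^sup>2)"

lemma square_integrableD:
  assumes "square_integrable M u"
  shows square_integrable_measurable: "u \<in> borel_measurable M"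
    and square_integrable_norm_squared: "integrable M (\<lambda>w. (norm (u w))\<^sup>2)"
  using assms unfolding square_integrable_def by auto

lemma square_integrable_inner:
  assumes "square_integrable M u" "square_integrable M v"
  shows "integrable M (\<lambda>w. inner (u w) (v w))"
proof (rule Bochner_Integration.integrable_bound)
  show "integrable M (\<lambda>w. (norm (u w))\<^sup>2 + (norm (v w))\<^sup>2)"
    using assms by (auto dest: square_integrable_norm_squared)
  show "(\<lambda>w. inner (u w) (v w)) \<in> borel_measurable M"
    using assms by (intro borel_measurable_inner square_integrable_measurable)
  have "\<bar>inner (u w) (v w)\<bar> \<le> (norm (u w))\<^sup>2 + (norm (v w))\<^sup>2" for w
    using Cauchy_Schwarz_ineq2[of "u w" "v w"] sum_squares_bound[of "norm (u w)" "norm (v w)"]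
      mult_nonneg_nonneg[of "norm (u w)" "norm (v w)"] by linarith
  then show "AE w in M. norm (inner (u w) (v w)) \<le> norm ((norm (u w))\<^sup>2 + (norm (v w))\<^sup>2)"
    by simp
qed

lemma square_integrable_add:
  assumes "square_integrable M u" "square_integrable M v"
  shows "square_integrable M (\<lambda>w. u w + v w)"
proof -
  have "(norm (u w + v w))\<^sup>2 = (norm (u w))\<^sup>2 + 2 * inner (u w) (v w) + (norm (v w))\<^sup>2" for w
    by (simp add: power2_norm_eq_inner algebra_simps inner_commute)
  then show ?thesis
    using assms square_integrable_inner[OF assms] unfolding square_integrable_def by auto
qed

lemma square_integrable_scaleR:
  assumes "square_integrable M u"
  shows "square_integrable M (\<lambda>w. c *\<^sub>R u w)"
  using assms unfolding square_integrable_def by (auto simp: power_mult_distrib)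

lemma square_integrable_diff:
  assumes "square_integrable M u" "square_integrable M v"
  shows "square_integrable M (\<lambda>w. u w - v w)"
  using square_integrable_add[OF assms(1) square_integrable_scaleR[OF assms(2), of "-1"]] by simp

lemma square_integrable_const:
  assumes "finite_measure M"
  shows "square_integrable M (\<lambda>w. c)"
  unfolding square_integrable_def using finite_measure.integrable_const[OF assms] by auto

lemma square_integrable_sum:
  assumes "\<And>i. i \<in> I \<Longrightarrow> square_integrable M (u i)"
  shows "square_integrable M (\<lambda>w. \<Sum>i\<in>I. u i w)"
  using assms
proof (induction I rule: infinite_finite_induct)
  case (insert i I)
  then show ?case
    using square_integrable_add[of M "u i" "\<lambda>w. \<Sum>i\<in>I. u i w"] by simp
qed (simp_all add: square_integrable_def)

lemma square_integrable_affine_bound: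
  assumes "finite_measure M" "square_integrable M u" "v \<in> borel_measurable M"
    and bound: "\<And>w. w \<in> space M \<Longrightarrow> norm (v w) \<le> C + K * norm (u w)"
  shows "square_integrable M v"
  unfolding square_integrable_def
proof
  show "integrable M (\<lambda>w. (norm (v w))\<^sup>2)"
  proof (rule Bochner_Integration.integrable_bound)
    show "integrable M (\<lambda>w. 2 * C\<^sup>2 + 2 * K\<^sup>2 * (norm (u w))\<^sup>2)"
      by (intro Bochner_Integration.integrable_add integrable_mult_right
          finite_measure.integrable_const[OF assms(1)] square_integrable_norm_squared[OF assms(2)])
    show "(\<lambda>w. (norm (v w))\<^sup>2) \<in> borel_measurable M"
      using assms by auto
    have "(norm (v w))\<^sup>2 \<le> 2 * C\<^sup>2 + 2 * K\<^sup>2 * (norm (u w))\<^sup>2" if "w \<in> space M" for w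
    proof -
      have "(norm (v w))\<^sup>2 \<le> (C + K * norm (u w))\<^sup>2"
        using bound[OF that] by (intro power_mono) auto
      also have "\<dots> \<le> 2 * C\<^sup>2 + 2 * K\<^sup>2 * (norm (u w))\<^sup>2"
        using sum_squares_bound[of C "K * norm (u w)"] by (simp add: power2_sum power_mult_distrib)
      finally show ?thesis .
    qed
    then show "AE w in M. norm ((norm (v w))\<^sup>2) \<le> norm (2 * C\<^sup>2 + 2 * K\<^sup>2 * (norm (u w))\<^sup>2)"
      by (auto intro!: AE_I2)
  qed
qed fact

lemma integral_norm_sum_squared_uncorrelated:
  fixes \<xi> :: "nat \<Rightarrow> 'w \<Rightarrow> 'a::euclidean_space"
  assumes sq_int: "\<And>i. i < n \<Longrightarrow> square_integrable M (\<xi> i)"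
    and uncorrelated: "\<And>i j. i < n \<Longrightarrow> j < n \<Longrightarrow> i \<noteq> j \<Longrightarrow> integral\<^sup>L M (\<lambda>w. inner (\<xi> i w) (\<xi> j w)) = 0"
  shows "integral\<^sup>L M (\<lambda>w. (norm (\<Sum>i<n. \<xi> i w))\<^sup>2) = (\<Sum>i<n. integral\<^sup>L M (\<lambda>w. (norm (\<xi> i w))\<^sup>2))"
proof -
  have int: "integrable M (\<lambda>w. inner (\<xi> i w) (\<xi> j w))" if "i < n" "j < n" for i j
    using square_integrable_inner[OF sq_int sq_int] that .
  have expand: "(norm (\<Sum>i<n. \<xi> i w))\<^sup>2 = (\<Sum>i<n. \<Sum>j<n. inner (\<xi> i w) (\<xi> j w))" for w
    by (simp add: power2_norm_eq_inner inner_sum_left inner_sum_right) (rule sum.swap)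
  have "integral\<^sup>L M (\<lambda>w. (norm (\<Sum>i<n. \<xi> i w))\<^sup>2)
      = (\<Sum>i<n. integral\<^sup>L M (\<lambda>w. \<Sum>j<n. inner (\<xi> i w) (\<xi> j w)))"
    unfolding expand
    using int by (intro Bochner_Integration.integral_sum Bochner_Integration.integrable_sum) auto
  also have "\<dots> = (\<Sum>i<n. \<Sum>j<n. integral\<^sup>L M (\<lambda>w. inner (\<xi> i w) (\<xi> j w)))"
    using int by (intro sum.cong refl Bochner_Integration.integral_sum) auto
  also have "\<dots> = (\<Sum>i<n. integral\<^sup>L M (\<lambda>w. inner (\<xi> i w) (\<xi> i w)))"
  proof (rule sum.cong)
    fix i assume "i \<in> {..<n}"
    then show "(\<Sum>j<n. integral\<^sup>L M (\<lambda>w. inner (\<xi> i w) (\<xi> j w))) = integral\<^sup>L M (\<lambda>w. inner (\<xi> i w) (\<xi> i w))"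
      using uncorrelated by (subst sum.remove[of _ i]) (auto intro!: sum.neutral)
  qed simp
  finally show ?thesis
    by (simp add: power2_norm_eq_inner)
qed

lemma integral_norm_average_squared_le:
  fixes \<xi> :: "nat \<Rightarrow> 'w \<Rightarrow> 'a::euclidean_space"
  assumes n: "n \<ge> 1"
    and sq_int: "\<And>i. i < n \<Longrightarrow> square_integrable M (\<xi> i)"
    and uncorrelated: "\<And>i j. i < n \<Longrightarrow> j < n \<Longrightarrow> i \<noteq> j \<Longrightarrow> integral\<^sup>L M (\<lambda>w. inner (\<xi> i w) (\<xi> j w)) = 0"
    and variance: "\<And>i. i < n \<Longrightarrow> integral\<^sup>L M (\<lambda>w. (norm (\<xi> i w))\<^sup>2) \<le> v"
  shows "integral\<^sup>L M (\<lambda>w. (norm ((1 / real n) *\<^sub>R (\<Sum>i<n. \<xi> i w)))\<^sup>2) \<le> v / real n"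
proof -
  have "integral\<^sup>L M (\<lambda>w. (norm ((1 / real n) *\<^sub>R (\<Sum>i<n. \<xi> i w)))\<^sup>2)
      = (1 / real n)\<^sup>2 * (\<Sum>i<n. integral\<^sup>L M (\<lambda>w. (norm (\<xi> i w))\<^sup>2))"
  proof -
    have "(norm ((1 / real n) *\<^sub>R (\<Sum>i<n. \<xi> i w)))\<^sup>2 = (1 / real n)\<^sup>2 * (norm (\<Sum>i<n. \<xi> i w))\<^sup>2" for w
      by (simp add: power_divide)
    then show ?thesis
      by (simp add: integral_norm_sum_squared_uncorrelated[OF sq_int uncorrelated])
  qed
  also have "\<dots> \<le> (1 / real n)\<^sup>2 * (\<Sum>i<n. v)"
    using variance by (intro mult_left_mono sum_mono) auto
  also have "\<dots> = v / real n"
    using n by (simp add: power2_eq_square)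
  finally show ?thesis .
qed

lemma integral_le_of_real_cond_exp_le:
  assumes "finite_measure M" "subalgebra M F" "integrable M \<phi>" "integrable M c"
    and le: "AE w in M. real_cond_exp M F \<phi> w \<le> c w"
  shows "integral\<^sup>L M \<phi> \<le> integral\<^sup>L M c"
proof -
  interpret finite_measure_subalgebra M F
    using assms(1,2) by (simp add: finite_measure_subalgebra_def finite_measure_subalgebra_axioms_def)
  have "integral\<^sup>L M \<phi> = integral\<^sup>L M (real_cond_exp M F \<phi>)"
    using real_cond_exp_int(2)[OF assms(3)] by simp
  also have "\<dots> \<le> integral\<^sup>L M c"
    by (rule integral_mono_AE[OF real_cond_exp_int(1)[OF assms(3)] assms(4) le])
  finally show ?thesis .
qed

lemma integral_eq_0_of_real_cond_exp_eq_0: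
  assumes "finite_measure M" "subalgebra M F" "integrable M \<phi>"
    and eq: "AE w in M. real_cond_exp M F \<phi> w = 0"
  shows "integral\<^sup>L M \<phi> = 0"
proof -
  interpret finite_measure_subalgebra M F
    using assms(1,2) by (simp add: finite_measure_subalgebra_def finite_measure_subalgebra_axioms_def)
  have "integral\<^sup>L M \<phi> = integral\<^sup>L M (real_cond_exp M F \<phi>)"
    using real_cond_exp_int(2)[OF assms(3)] by simp
  also have "\<dots> = integral\<^sup>L M (\<lambda>w. 0)"
    using eq by (intro integral_cong_AE) auto
  finally show ?thesis by simp
qed

lemma integral_inner_cond_unbiased_eq_0:
  fixes g p U :: "'w \<Rightarrow> 'a::euclidean_space"
  assumes "finite_measure M" "subalgebra M F"
    and sq_int: "square_integrable M g" "square_integrable M p" "square_integrable M U"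
    and U_meas: "U \<in> borel_measurable F"
    and unbiased: "\<And>v. AE w in M. real_cond_exp M F (\<lambda>w. inner (g w) v) w = inner (p w) v"
  shows "integral\<^sup>L M (\<lambda>w. inner (g w - p w) (U w)) = 0"
proof -
  interpret finite_measure_subalgebra M F
    using assms(1,2) by (simp add: finite_measure_subalgebra_def finite_measure_subalgebra_axioms_def)
  \<comment> \<open>Expand in the basis: each coordinate of \<open>U\<close> is \<open>F\<close>-measurable and can be pulled
    into the conditional expectation.\<close>
  have coord_int: "integrable M (\<lambda>w. inner (U w) b * inner (q w) b)"
    if "square_integrable M q" "b \<in> Basis" for q b
  proof -
    have "square_integrable M (\<lambda>w. inner (U w) b *\<^sub>R b)"
      using that(2) square_integrable_measurable[OF sq_int(3)]
      by (intro square_integrable_affine_bound[OF assms(1) sq_int(3), of _ 0 1]) (auto simp: Basis_le_norm)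
    from square_integrable_inner[OF this that(1)] show ?thesis
      by (simp add: inner_commute)
  qed
  have U_coord_meas: "(\<lambda>w. inner (U w) b) \<in> borel_measurable F" for b
    using U_meas by measurable
  have coord_eq: "integral\<^sup>L M (\<lambda>w. inner (U w) b * inner (g w) b) = integral\<^sup>L M (\<lambda>w. inner (U w) b * inner (p w) b)"
    if b: "b \<in> Basis" for b
  proof -
    have "integral\<^sup>L M (\<lambda>w. inner (U w) b * inner (g w) b)
        = integral\<^sup>L M (\<lambda>w. inner (U w) b * real_cond_exp M F (\<lambda>w. inner (g w) b) w)"
      by (rule real_cond_exp_intg(2)[symmetric, OF coord_int[OF sq_int(1) b] U_coord_meas])
        (use sq_int(1) in \<open>auto dest: square_integrable_measurable\<close>)
    also have "\<dots> = integral\<^sup>L M (\<lambda>w. inner (U w) b * inner (p w) b)"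
      using unbiased[of b] by (intro integral_cong_AE) (use sq_int U_coord_meas in \<open>auto simp: square_integrable_def\<close>)
    finally show ?thesis .
  qed
  have basis_expansion: "integral\<^sup>L M (\<lambda>w. inner (q w) (U w))
      = (\<Sum>b\<in>Basis. integral\<^sup>L M (\<lambda>w. inner (U w) b * inner (q w) b))" if "square_integrable M q" for q
    using coord_int[OF that]
    by (subst euclidean_inner) (simp add: mult.commute Bochner_Integration.integral_sum)
  have "integral\<^sup>L M (\<lambda>w. inner (g w - p w) (U w))
      = integral\<^sup>L M (\<lambda>w. inner (g w) (U w)) - integral\<^sup>L M (\<lambda>w. inner (p w) (U w))"
    using square_integrable_inner[OF sq_int(1,3)] square_integrable_inner[OF sq_int(2,3)]
    by (simp add: inner_diff_left)
  also have "\<dots> = 0"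
    using basis_expansion[OF sq_int(1)] basis_expansion[OF sq_int(2)] coord_eq by simp
  finally show ?thesis .
qed

section \<open>Pointwise inequalities\<close>

lemma two_inner_le_weighted:
  fixes a b :: "'a::real_inner"
  assumes "c > 0"
  shows "2 * inner a b \<le> c * (norm a)\<^sup>2 + (norm b)\<^sup>2 / c"
proof -
  have "2 * inner a b \<le> 2 * (norm a * norm b)"
    using norm_cauchy_schwarz[of a b] by simp
  also have "\<dots> \<le> c * (norm a)\<^sup>2 + (norm b)\<^sup>2 / c"
  proof -
    have "0 \<le> (c * norm a - norm b)\<^sup>2 / c"
      using assms by simp
    also have "\<dots> = c * (norm a)\<^sup>2 + (norm b)\<^sup>2 / c - 2 * (norm a * norm b)"
      using assms by (simp add: power2_eq_square field_simps)
    finally show ?thesis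
      by simp
  qed
  finally show ?thesis .
qed

lemma norm_add_squared_le:
  fixes a b :: "'a::real_inner"
  assumes "\<beta> > 0"
  shows "(norm (a + b))\<^sup>2 \<le> (1 + \<beta>) * (norm a)\<^sup>2 + (1 + 1 / \<beta>) * (norm b)\<^sup>2"
proof -
  have "(norm (a + b))\<^sup>2 = (norm a)\<^sup>2 + 2 * inner a b + (norm b)\<^sup>2"
    by (simp add: power2_norm_eq_inner inner_add_left inner_add_right inner_commute)
  moreover have "(1 + \<beta>) * (norm a)\<^sup>2 + (1 + 1 / \<beta>) * (norm b)\<^sup>2
      = (norm a)\<^sup>2 + (\<beta> * (norm a)\<^sup>2 + (norm b)\<^sup>2 / \<beta>) + (norm b)\<^sup>2"
    by (simp add: algebra_simps)
  ultimately show ?thesis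
    using two_inner_le_weighted[OF assms, of a b] by linarith
qed

lemma norm_average_squared_le:
  fixes a :: "nat \<Rightarrow> 'a::real_inner"
  assumes n: "n \<ge> 1"
  shows "(norm ((1 / real n) *\<^sub>R (\<Sum>i<n. a i)))\<^sup>2 \<le> (1 / real n) * (\<Sum>i<n. (norm (a i))\<^sup>2)"
proof -
  define m where "m = (1 / real n) *\<^sub>R (\<Sum>i<n. a i)"
  have sum_eq: "(\<Sum>i<n. a i) = real n *\<^sub>R m"
    unfolding m_def using n by simp
  have "0 \<le> (\<Sum>i<n. (norm (a i - m))\<^sup>2)"
    by (simp add: sum_nonneg)
  also have "\<dots> = (\<Sum>i<n. (norm (a i))\<^sup>2 - 2 * inner (a i) m + (norm m)\<^sup>2)"
    by (intro sum.cong refl)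
      (simp add: power2_norm_eq_inner inner_diff_left inner_diff_right inner_commute algebra_simps)
  also have "\<dots> = (\<Sum>i<n. (norm (a i))\<^sup>2) - 2 * inner (\<Sum>i<n. a i) m + real n * (norm m)\<^sup>2"
    by (simp add: sum.distrib sum_subtractf inner_sum_left sum_distrib_left)
  also have "\<dots> = (\<Sum>i<n. (norm (a i))\<^sup>2) - real n * (norm m)\<^sup>2"
    unfolding sum_eq by (simp add: power2_norm_eq_inner)
  finally have "real n * (norm m)\<^sup>2 \<le> (\<Sum>i<n. (norm (a i))\<^sup>2)"
    by simp
  then show ?thesis
    unfolding m_def[symmetric] using n by (simp add: field_simps)
qed

lemma perturbed_gradient_step_bound:
  fixes y z e d xs :: "'a::real_inner"
  assumes y: "y = z + \<gamma> *\<^sub>R e"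
    and quasi_convex: "\<Phi> + \<mu> / 2 * (norm (z - xs))\<^sup>2 \<le> inner d (z - xs)"
    and grad: "(norm d)\<^sup>2 \<le> 2 * L * \<Phi>"
    and "0 \<le> \<Phi>" "0 \<le> \<mu>" "\<mu> \<le> 2 * L" "0 < \<gamma>" "0 < L"
  shows "(norm (y - \<gamma> *\<^sub>R d - xs))\<^sup>2
    \<le> (1 - \<gamma> * \<mu> / 2) * (norm (y - xs))\<^sup>2 - \<gamma> * (1 - 2 * L * \<gamma>) * \<Phi> + 4 * L * \<gamma>^3 * (norm e)\<^sup>2"
proof -
  define a where "a = z - xs"
  define r where "r = (norm (y - xs))\<^sup>2"
  have ya: "y - xs = a + \<gamma> *\<^sub>R e"
    unfolding a_def y by simp
  have "(norm (y - \<gamma> *\<^sub>R d - xs))\<^sup>2 = r - 2 * \<gamma> * inner (y - xs) d + \<gamma>\<^sup>2 * (norm d)\<^sup>2"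
    unfolding r_def power2_norm_eq_inner
    by (simp add: inner_diff_left inner_diff_right inner_commute power2_eq_square algebra_simps)
  also have "inner (y - xs) d = inner a d + \<gamma> * inner e d"
    unfolding ya by (simp add: inner_add_left)
  finally have expand: "(norm (y - \<gamma> *\<^sub>R d - xs))\<^sup>2
      = r - 2 * \<gamma> * inner a d - 2 * \<gamma>\<^sup>2 * inner e d + \<gamma>\<^sup>2 * (norm d)\<^sup>2"
    by (simp add: algebra_simps power2_eq_square)
  have inner_a: "- 2 * \<gamma> * inner a d \<le> - 2 * \<gamma> * \<Phi> - \<gamma> * \<mu> * (norm a)\<^sup>2"
    using quasi_convex \<open>0 < \<gamma>\<close> mult_left_mono[OF quasi_convex, of \<gamma>]
    unfolding a_def by (simp add: inner_commute algebra_simps)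
  have "r \<le> (1 + 1) * (norm a)\<^sup>2 + (1 + 1 / 1) * (norm (\<gamma> *\<^sub>R e))\<^sup>2"
    unfolding r_def ya by (rule norm_add_squared_le) simp
  then have "\<gamma> * \<mu> * r \<le> \<gamma> * \<mu> * (2 * (norm a)\<^sup>2 + 2 * \<gamma>\<^sup>2 * (norm e)\<^sup>2)"
    using assms by (intro mult_left_mono) (auto simp: power_mult_distrib)
  then have norm_a: "- \<gamma> * \<mu> * (norm a)\<^sup>2 \<le> - \<gamma> * \<mu> / 2 * r + \<gamma>^3 * \<mu> * (norm e)\<^sup>2"
    by (simp add: algebra_simps power2_eq_square power3_eq_cube)
  \<comment> \<open>The weight \<open>2L\<close> makes the gradient part of the cross term cost at most \<open>\<gamma> \<Phi>\<close>.\<close>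
  have "2 * inner (- \<gamma> *\<^sub>R e) d \<le> 2 * L * (norm (- \<gamma> *\<^sub>R e))\<^sup>2 + (norm d)\<^sup>2 / (2 * L)"
    using assms by (intro two_inner_le_weighted) auto
  then have "\<gamma> * (2 * inner (- \<gamma> *\<^sub>R e) d) \<le> \<gamma> * (2 * L * (norm (- \<gamma> *\<^sub>R e))\<^sup>2 + (norm d)\<^sup>2 / (2 * L))"
    using assms by (intro mult_left_mono) auto
  then have cross: "- 2 * \<gamma>\<^sup>2 * inner e d \<le> 2 * L * \<gamma>^3 * (norm e)\<^sup>2 + \<gamma> / (2 * L) * (norm d)\<^sup>2"
    by (simp add: power2_eq_square power3_eq_cube algebra_simps)
  have "\<gamma> / (2 * L) * (norm d)\<^sup>2 \<le> \<gamma> / (2 * L) * (2 * L * \<Phi>)"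
    using grad assms by (intro mult_left_mono) auto
  then have grad_1: "\<gamma> / (2 * L) * (norm d)\<^sup>2 \<le> \<gamma> * \<Phi>"
    using assms by simp
  have grad_2: "\<gamma>\<^sup>2 * (norm d)\<^sup>2 \<le> \<gamma>\<^sup>2 * (2 * L * \<Phi>)"
    using grad by (intro mult_left_mono) auto
  have mu: "\<gamma>^3 * \<mu> * (norm e)\<^sup>2 \<le> \<gamma>^3 * (2 * L) * (norm e)\<^sup>2"
    using assms by (intro mult_right_mono mult_left_mono) auto
  show ?thesis
    unfolding expand r_def[symmetric]
    using inner_a norm_a cross grad_1 grad_2 mu by (simp add: algebra_simps power2_eq_square)
qed

lemma compressed_error_bound:
  fixes e k \<xi> :: "'a::real_inner"
  assumes "0 < \<delta>" "\<delta> \<le> 1"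
  shows "(1 - \<delta>) * (norm (e + k + \<xi>))\<^sup>2 \<le> (1 - \<delta> / 2) * (norm e)\<^sup>2 + (2 / \<delta>) * (norm k)\<^sup>2
     + 2 * (1 - \<delta>) * inner (e + k) \<xi> + (norm \<xi>)\<^sup>2"
proof -
  have "(norm (e + k + \<xi>))\<^sup>2 = (norm (e + k))\<^sup>2 + 2 * inner (e + k) \<xi> + (norm \<xi>)\<^sup>2"
    by (simp add: power2_norm_eq_inner inner_add_left inner_add_right inner_commute)
  then have expand: "(1 - \<delta>) * (norm (e + k + \<xi>))\<^sup>2
      = (1 - \<delta>) * (norm (e + k))\<^sup>2 + 2 * (1 - \<delta>) * inner (e + k) \<xi> + (1 - \<delta>) * (norm \<xi>)\<^sup>2"
    by (simp add: algebra_simps)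
  have "(norm (e + k))\<^sup>2 \<le> (1 + \<delta> / 2) * (norm e)\<^sup>2 + (1 + 1 / (\<delta> / 2)) * (norm k)\<^sup>2"
    by (rule norm_add_squared_le) (use assms in simp)
  then have "(1 - \<delta>) * (norm (e + k))\<^sup>2
      \<le> (1 - \<delta>) * ((1 + \<delta> / 2) * (norm e)\<^sup>2 + (1 + 2 / \<delta>) * (norm k)\<^sup>2)"
    using assms by (intro mult_left_mono) auto
  then have "(1 - \<delta>) * (norm (e + k))\<^sup>2
      \<le> (1 - \<delta>) * (1 + \<delta> / 2) * (norm e)\<^sup>2 + (1 - \<delta>) * (1 + 2 / \<delta>) * (norm k)\<^sup>2"
    by (simp add: algebra_simps)
  moreover have "(1 - \<delta>) * (1 + \<delta> / 2) * (norm e)\<^sup>2 \<le> (1 - \<delta> / 2) * (norm e)\<^sup>2"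
    using assms by (intro mult_right_mono) (auto simp: algebra_simps)
  moreover have "(1 - \<delta>) * (1 + 2 / \<delta>) * (norm k)\<^sup>2 \<le> 2 / \<delta> * (norm k)\<^sup>2"
    using assms by (intro mult_right_mono) (auto simp: field_simps)
  moreover have "(1 - \<delta>) * (norm \<xi>)\<^sup>2 \<le> (norm \<xi>)\<^sup>2"
    using assms by (simp add: algebra_simps)
  ultimately show ?thesis
    unfolding expand by linarith
qed

lemma stepsize_bounds:
  assumes "L > 0" "\<gamma> > 0" "\<gamma> \<le> \<delta> / (8 * sqrt 6 * L)"
  shows "16 * L * \<gamma> \<le> \<delta>" and "384 * (L * \<gamma>)\<^sup>2 \<le> \<delta>\<^sup>2"
proof -
  have step: "\<gamma> * (8 * sqrt 6 * L) \<le> \<delta>"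
    using assms by (simp add: pos_le_divide_eq)
  have "2 \<le> sqrt 6"
    by (simp add: real_le_rsqrt)
  then have "16 * L * \<gamma> \<le> \<gamma> * (8 * sqrt 6 * L)"
    using assms by (simp add: mult_left_mono)
  then show "16 * L * \<gamma> \<le> \<delta>"
    using step by linarith
  have "(\<gamma> * (8 * sqrt 6 * L))\<^sup>2 \<le> \<delta>\<^sup>2"
    using step assms by (intro power_mono) auto
  then show "384 * (L * \<gamma>)\<^sup>2 \<le> \<delta>\<^sup>2"
    by (simp add: power_mult_distrib algebra_simps)
qed

(* The weight 12 L \<gamma>^3 / \<delta> of the error is chosen so that its contraction \<delta> / 2 pays for the
   4 L \<gamma>^3 of the distance recursion, with room to spare for the factor 1 - \<gamma> \<mu> / 2. *)
lemma lyapunov_coefficients: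
  fixes L \<mu> \<delta> \<gamma> :: real
  assumes pos: "L > 0" "0 < \<delta>" "\<delta> \<le> 1" "\<gamma> > 0" "0 \<le> \<mu>" "\<mu> \<le> 2 * L"
    and step: "\<gamma> \<le> \<delta> / (8 * sqrt 6 * L)"
  shows "4 * L * \<gamma>^3 + 12 * L * \<gamma>^3 / \<delta> * (1 - \<delta> / 2) \<le> (1 - \<gamma> * \<mu> / 2) * (12 * L * \<gamma>^3 / \<delta>)"
    and "- \<gamma> * (1 - 2 * L * \<gamma>) + 96 * L\<^sup>2 * \<gamma>^3 / \<delta>\<^sup>2 \<le> - \<gamma> / 4"
proof -
  define a where "a = 12 * L * \<gamma>^3 / \<delta>"
  have L\<gamma>: "16 * L * \<gamma> \<le> \<delta>" and L\<gamma>_sq: "384 * (L * \<gamma>)\<^sup>2 \<le> \<delta>\<^sup>2"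
    using stepsize_bounds[OF pos(1,4) step] by auto
  have "\<gamma> * \<mu> \<le> 2 * L * \<gamma>"
    using pos mult_left_mono[of \<mu> "2 * L" \<gamma>] by (simp add: algebra_simps)
  then have "\<gamma> * \<mu> \<le> \<delta> / 3"
    using pos L\<gamma> by linarith
  then have "(\<gamma> * \<mu> / 2) * a \<le> (\<delta> / 6) * a"
    unfolding a_def using pos by (intro mult_right_mono) auto
  moreover have "4 * L * \<gamma>^3 = a * \<delta> / 3"
    unfolding a_def using pos by simp
  ultimately have "4 * L * \<gamma>^3 + a * (1 - \<delta> / 2) \<le> (1 - \<gamma> * \<mu> / 2) * a"
    by (simp add: algebra_simps)
  then show "4 * L * \<gamma>^3 + 12 * L * \<gamma>^3 / \<delta> * (1 - \<delta> / 2) \<le> (1 - \<gamma> * \<mu> / 2) * (12 * L * \<gamma>^3 / \<delta>)"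
    unfolding a_def .
  have "96 * L\<^sup>2 * \<gamma>^3 / \<delta>\<^sup>2 = \<gamma> * (96 * (L * \<gamma>)\<^sup>2 / \<delta>\<^sup>2)"
    using pos by (simp add: field_simps power2_eq_square power3_eq_cube)
  also have "\<dots> \<le> \<gamma> * (1 / 4)"
    using L\<gamma>_sq pos by (intro mult_left_mono) (auto simp: field_simps)
  finally have "96 * L\<^sup>2 * \<gamma>^3 / \<delta>\<^sup>2 \<le> \<gamma> / 4"
    by simp
  moreover have "\<gamma> * (2 * L * \<gamma>) \<le> \<gamma> * (1 / 8)"
    using L\<gamma> pos by (intro mult_left_mono) auto
  moreover have "- \<gamma> * (1 - 2 * L * \<gamma>) = - \<gamma> + \<gamma> * (2 * L * \<gamma>)"
    by (simp add: algebra_simps)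
  ultimately show "- \<gamma> * (1 - 2 * L * \<gamma>) + 96 * L\<^sup>2 * \<gamma>^3 / \<delta>\<^sup>2 \<le> - \<gamma> / 4"
    using pos by linarith
qed

lemma lyapunov_step_arith:
  fixes L \<mu> \<delta> \<gamma> \<alpha> v N X0 X1 E0 E1 F :: real
  assumes pos: "L > 0" "0 < \<delta>" "\<delta> \<le> 1" "\<gamma> > 0" "0 \<le> \<mu>" "\<mu> \<le> 2 * L"
    and step: "\<gamma> \<le> \<delta> / (8 * sqrt 6 * L)"
    and nonneg: "E0 \<ge> 0" "F \<ge> 0"
    and X_step: "X1 \<le> (1 - \<gamma> * \<mu> / 2) * X0 - \<gamma> * (1 - 2 * L * \<gamma>) * F + 4 * L * \<gamma>^3 * E0 + \<gamma>\<^sup>2 * v / N"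
    and E_step: "E1 \<le> (1 - \<delta> / 2) * E0 + (2 / \<delta>) * (4 * L * F + 2 * \<alpha>) + v"
  shows "X1 + 12 * L * \<gamma>^3 / \<delta> * E1 \<le> (1 - \<gamma> * \<mu> / 2) * (X0 + 12 * L * \<gamma>^3 / \<delta> * E0) - \<gamma> / 4 * F
      + \<gamma>\<^sup>2 * v / N + \<gamma>^3 * (48 * L * \<alpha> / \<delta>\<^sup>2 + 12 * L * v / \<delta>)"
proof -
  define a where "a = 12 * L * \<gamma>^3 / \<delta>"
  have "a * E1 \<le> a * ((1 - \<delta> / 2) * E0 + (2 / \<delta>) * (4 * L * F + 2 * \<alpha>) + v)"
    using E_step pos unfolding a_def by (intro mult_left_mono) auto
  also have "\<dots> = a * (1 - \<delta> / 2) * E0 + (96 * L\<^sup>2 * \<gamma>^3 / \<delta>\<^sup>2) * F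
      + \<gamma>^3 * (48 * L * \<alpha> / \<delta>\<^sup>2 + 12 * L * v / \<delta>)"
    unfolding a_def using pos by (simp add: field_simps power2_eq_square)
  finally have aE: "a * E1 \<le> a * (1 - \<delta> / 2) * E0 + (96 * L\<^sup>2 * \<gamma>^3 / \<delta>\<^sup>2) * F
      + \<gamma>^3 * (48 * L * \<alpha> / \<delta>\<^sup>2 + 12 * L * v / \<delta>)" .
  note coeffs = lyapunov_coefficients[OF pos step, folded a_def]
  have "4 * L * \<gamma>^3 * E0 + a * (1 - \<delta> / 2) * E0 \<le> (1 - \<gamma> * \<mu> / 2) * a * E0"
    using mult_right_mono[OF coeffs(1) nonneg(1)] by (simp add: algebra_simps)
  moreover have "- (\<gamma> * (1 - 2 * L * \<gamma>) * F) + 96 * L\<^sup>2 * \<gamma>^3 / \<delta>\<^sup>2 * F \<le> - (\<gamma> / 4 * F)"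
    using mult_right_mono[OF coeffs(2) nonneg(2)] by (simp add: algebra_simps)
  moreover have "(1 - \<gamma> * \<mu> / 2) * (X0 + a * E0) = (1 - \<gamma> * \<mu> / 2) * X0 + (1 - \<gamma> * \<mu> / 2) * a * E0"
    by (simp add: algebra_simps)
  ultimately show ?thesis
    using X_step aE unfolding a_def[symmetric] by linarith
qed

section \<open>The EC-Approximate iteration\<close>

locale smooth_convex_sum =
  fixes n :: nat and fi :: "nat \<Rightarrow> 'a::euclidean_space \<Rightarrow> real" and dfi :: "nat \<Rightarrow> 'a \<Rightarrow> 'a"
    and L \<mu> :: real and xs :: 'a and f :: "'a \<Rightarrow> real" and df :: "'a \<Rightarrow> 'a"
  assumes n: "n \<ge> 1" and L: "L > 0" and mu: "\<mu> > 0"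
    and smooth: "\<And>i. i < n \<Longrightarrow> L_smooth L (fi i) (dfi i)"
    and conv: "\<And>i. i < n \<Longrightarrow> convex_on UNIV (fi i)"
    and f_def: "f = (\<lambda>y. (1 / real n) * (\<Sum>i<n. fi i y))"
    and df_def: "df = (\<lambda>y. (1 / real n) *\<^sub>R (\<Sum>i<n. dfi i y))"
    and sqc: "strongly_quasi_convex_around \<mu> f df xs"
    and xs_min: "\<And>y. f xs \<le> f y"
begin

lemma f_L_smooth: "L_smooth L f df"
  unfolding f_def df_def by (rule L_smooth_average[OF n smooth])

lemma df_xs: "df xs = 0"
  by (rule L_smooth_gradient_eq_0_at_minimum[OF f_L_smooth xs_min])

lemma gap_le: "f y - f xs \<le> L / 2 * (norm (y - xs))\<^sup>2"
  using L_smooth_upper_bound[OF f_L_smooth, of y xs] df_xs by simp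

lemma quasi_convex_inner: "f y - f xs + \<mu> / 2 * (norm (y - xs))\<^sup>2 \<le> inner (df y) (y - xs)"
proof -
  have "f y + inner (df y) (xs - y) + \<mu> / 2 * (norm (xs - y))\<^sup>2 \<le> f xs"
    using sqc unfolding strongly_quasi_convex_around_def by blast
  moreover have "inner (df y) (xs - y) = - inner (df y) (y - xs)"
    by (simp add: inner_diff_right)
  ultimately show ?thesis
    by (simp add: norm_minus_commute)
qed

lemma average_gradient_diff_le:
  "(1 / real n) * (\<Sum>i<n. (norm (dfi i y - dfi i xs))\<^sup>2) \<le> 2 * L * (f y - f xs)"
proof -
  have "(\<Sum>i<n. (norm (dfi i y - dfi i xs))\<^sup>2)
      \<le> (\<Sum>i<n. 2 * L * (fi i y - fi i xs - inner (dfi i xs) (y - xs)))"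
    using L by (intro sum_mono L_smooth_convex_cocoercive smooth conv) auto
  also have "\<dots> = 2 * L * ((\<Sum>i<n. fi i y) - (\<Sum>i<n. fi i xs) - inner (\<Sum>i<n. dfi i xs) (y - xs))"
    by (simp add: sum_subtractf inner_sum_left flip: sum_distrib_left)
  also have "\<dots> = 2 * L * real n * (f y - f xs - inner (df xs) (y - xs))"
    unfolding f_def df_def using n by (simp add: field_simps inner_sum_left)
  also have "\<dots> = 2 * L * real n * (f y - f xs)"
    using df_xs by simp
  finally show ?thesis
    using n by (simp add: field_simps)
qed

lemma norm_df_squared_le: "(norm (df y))\<^sup>2 \<le> 2 * L * (f y - f xs)"
proof -
  have "df y = (1 / real n) *\<^sub>R (\<Sum>i<n. dfi i y - dfi i xs)"
    using df_xs unfolding df_def by (simp add: sum_subtractf scaleR_diff_right)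
  then have "(norm (df y))\<^sup>2 \<le> (1 / real n) * (\<Sum>i<n. (norm (dfi i y - dfi i xs))\<^sup>2)"
    using norm_average_squared_le[OF n, of "\<lambda>i. dfi i y - dfi i xs"] by simp
  also have "\<dots> \<le> 2 * L * (f y - f xs)"
    by (rule average_gradient_diff_le)
  finally show ?thesis .
qed

lemma mu_le_2L: "\<mu> \<le> 2 * L"
proof -
  obtain b :: 'a where b: "norm b = 1"
    using norm_Basis nonempty_Basis by blast
  have "\<mu> / 2 \<le> f (xs + b) - f xs + \<mu> / 2 * (norm b)\<^sup>2"
    using xs_min[of "xs + b"] b by simp
  also have "\<dots> \<le> inner (df (xs + b) - df xs) b"
    using quasi_convex_inner[of "xs + b"] df_xs by simp
  also have "\<dots> \<le> norm (df (xs + b) - df xs) * norm b"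
    by (rule norm_cauchy_schwarz)
  also have "\<dots> \<le> L"
    using f_L_smooth b unfolding L_smooth_def by (metis add_diff_cancel_left' mult_1_right)
  finally show ?thesis
    by simp
qed

end

locale ec_approximate = smooth_convex_sum n fi dfi L \<mu> xs f df
  for n :: nat and fi :: "nat \<Rightarrow> 'a::euclidean_space \<Rightarrow> real" and dfi :: "nat \<Rightarrow> 'a \<Rightarrow> 'a"
    and L \<mu> :: real and xs :: 'a and f :: "'a \<Rightarrow> real" and df :: "'a \<Rightarrow> 'a" +
  fixes M :: "'w measure" and Fil G :: "nat \<Rightarrow> 'w measure"
    and \<sigma> \<delta> \<gamma> \<alpha> :: real and x0 :: 'a and h :: "nat \<Rightarrow> 'a" and hbar :: 'a
    and x :: "nat \<Rightarrow> 'w \<Rightarrow> 'a" and e g D :: "nat \<Rightarrow> nat \<Rightarrow> 'w \<Rightarrow> 'a"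
  assumes M: "prob_space M"
    and delta: "0 < \<delta>" "\<delta> \<le> 1"
    and gamma: "0 < \<gamma>" "\<gamma> \<le> \<delta> / (8 * sqrt 6 * L)"
    and hbar_def: "hbar = (1 / real n) *\<^sub>R (\<Sum>i<n. h i)"
    and h_alpha: "(1 / real n) * (\<Sum>i<n. (norm (h i - dfi i xs))\<^sup>2) \<le> \<alpha>"
    and sub_F: "\<And>s. subalgebra M (Fil s)"
    and sub_G: "\<And>s. subalgebra M (G s)"
    and F_G: "\<And>s. sets (Fil s) \<subseteq> sets (G s)"
    and G_F: "\<And>s. sets (G s) \<subseteq> sets (Fil (Suc s))"
    and g_meas: "\<And>i s. i < n \<Longrightarrow> g i s \<in> borel_measurable (G s)"
    and D_meas: "\<And>i s. i < n \<Longrightarrow> D i s \<in> borel_measurable (Fil (Suc s))"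
    and g_int: "\<And>i s. i < n \<Longrightarrow> integrable M (\<lambda>w. (norm (g i s w))\<^sup>2)"
    and D_int: "\<And>i s. i < n \<Longrightarrow> integrable M (\<lambda>w. (norm (D i s w))\<^sup>2)"
    and x_0: "\<And>w. x 0 w = x0"
    and x_Suc: "\<And>s w. x (Suc s) w = x s w - \<gamma> *\<^sub>R hbar - (\<gamma> / real n) *\<^sub>R (\<Sum>i<n. D i s w)"
    and e_0: "\<And>i w. e i 0 w = 0"
    and e_Suc: "\<And>i s w. e i (Suc s) w = e i s w + g i s w - h i - D i s w"
    and unbiased: "\<And>i s v. i < n \<Longrightarrow>
       AE w in M. real_cond_exp M (Fil s) (\<lambda>w. inner (g i s w) v) w = inner (dfi i (x s w)) v"
    and variance: "\<And>i s. i < n \<Longrightarrow>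
       AE w in M. real_cond_exp M (Fil s) (\<lambda>w. (norm (g i s w - dfi i (x s w)))\<^sup>2) w \<le> \<sigma>\<^sup>2"
    and uncorrelated: "\<And>i j s. i < n \<Longrightarrow> j < n \<Longrightarrow> i \<noteq> j \<Longrightarrow>
       AE w in M. real_cond_exp M (Fil s)
         (\<lambda>w. inner (g i s w - dfi i (x s w)) (g j s w - dfi j (x s w))) w = 0"
    and compressor: "\<And>i s. i < n \<Longrightarrow>
       AE w in M. real_cond_exp M (G s)
         (\<lambda>w. (norm (D i s w - (e i s w + g i s w - h i)))\<^sup>2) w
         \<le> (1 - \<delta>) * (norm (e i s w + g i s w - h i))\<^sup>2"
begin

definition Ft :: "nat \<Rightarrow> real" where
  "Ft s = integral\<^sup>L M (\<lambda>w. f (x s w)) - f xs"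

definition Et :: "nat \<Rightarrow> real" where
  "Et s = (1 / real n) * (\<Sum>i<n. integral\<^sup>L M (\<lambda>w. (norm (e i s w))\<^sup>2))"

definition Xt :: "nat \<Rightarrow> real" where
  "Xt s = integral\<^sup>L M (\<lambda>w. (norm (virt_iter n \<gamma> x0 g s w - xs))\<^sup>2)"

definition noise :: "nat \<Rightarrow> nat \<Rightarrow> 'w \<Rightarrow> 'a" where
  "noise i s w = g i s w - dfi i (x s w)"

definition mean_noise :: "nat \<Rightarrow> 'w \<Rightarrow> 'a" where
  "mean_noise s w = (1 / real n) *\<^sub>R (\<Sum>i<n. noise i s w)"

lemma finite_M: "finite_measure M"
  using M unfolding prob_space_def by simp

lemma measure_space_eq_1 [simp]: "measure M (space M) = 1"
  by (rule prob_space.prob_space[OF M])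

lemma measurable_Fil_Suc:
  assumes "u \<in> borel_measurable (Fil s)"
  shows "u \<in> borel_measurable (Fil (Suc s))"
proof (rule measurable_from_subalg[OF _ assms])
  show "subalgebra (Fil (Suc s)) (Fil s)"
    using F_G[of s] G_F[of s] sub_F[of s] sub_F[of "Suc s"] unfolding subalgebra_def by auto
qed

lemma measurable_G_Fil_Suc:
  assumes "u \<in> borel_measurable (G s)"
  shows "u \<in> borel_measurable (Fil (Suc s))"
proof (rule measurable_from_subalg[OF _ assms])
  show "subalgebra (Fil (Suc s)) (G s)"
    using G_F[of s] sub_F[of "Suc s"] sub_G[of s] unfolding subalgebra_def by auto
qed

lemma x_measurable: "x s \<in> borel_measurable (Fil s)"
proof (induction s)
  case (Suc s)
  have "(\<lambda>w. x s w - \<gamma> *\<^sub>R hbar - (\<gamma> / real n) *\<^sub>R (\<Sum>i<n. D i s w)) \<in> borel_measurable (Fil (Suc s))"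
    using measurable_Fil_Suc[OF Suc] D_meas by (intro borel_measurable_diff borel_measurable_scaleR
        borel_measurable_const borel_measurable_sum) auto
  then show ?case
    by (simp add: x_Suc[abs_def])
qed (simp add: x_0[abs_def])

lemma e_measurable: "i < n \<Longrightarrow> e i s \<in> borel_measurable (Fil s)"
proof (induction s)
  case (Suc s)
  have "(\<lambda>w. e i s w + g i s w - h i - D i s w) \<in> borel_measurable (Fil (Suc s))"
    using measurable_Fil_Suc[OF Suc(1)[OF Suc(2)]] measurable_G_Fil_Suc[OF g_meas] D_meas Suc(2)
    by measurable
  then show ?case
    by (simp add: e_Suc[abs_def])
qed (simp add: e_0[abs_def])

lemma virt_iter_measurable: "virt_iter n \<gamma> x0 g s \<in> borel_measurable (Fil s)"
proof (induction s)
  case (Suc s)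
  have "(\<lambda>w. virt_iter n \<gamma> x0 g s w - (\<gamma> / real n) *\<^sub>R (\<Sum>i<n. g i s w)) \<in> borel_measurable (Fil (Suc s))"
    using measurable_Fil_Suc[OF Suc] measurable_G_Fil_Suc[OF g_meas]
    by (intro borel_measurable_diff borel_measurable_scaleR borel_measurable_const borel_measurable_sum) auto
  then show ?case
    by (simp add: virt_iter.simps(2)[abs_def])
qed simp

lemma grad_measurable: "i < n \<Longrightarrow> (\<lambda>w. dfi i (x s w)) \<in> borel_measurable (Fil s)"
  using L_smooth_continuous_gradient[OF smooth] L
  by (intro borel_measurable_continuous_on[OF _ x_measurable]) auto

lemma df_measurable: "(\<lambda>w. df (x s w)) \<in> borel_measurable (Fil s)"
  unfolding df_def
  by (intro borel_measurable_scaleR borel_measurable_const borel_measurable_sum grad_measurable) auto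

lemma measurable_M: "u \<in> borel_measurable (Fil s) \<Longrightarrow> u \<in> borel_measurable M"
  by (rule measurable_from_subalg[OF sub_F])

lemma square_integrable_const_M: "square_integrable M (\<lambda>w. c)"
  by (rule square_integrable_const[OF finite_M])

lemma square_integrable_g: "i < n \<Longrightarrow> square_integrable M (g i s)"
  unfolding square_integrable_def
  using g_int measurable_from_subalg[OF sub_G g_meas] by simp

lemma square_integrable_D: "i < n \<Longrightarrow> square_integrable M (D i s)"
  unfolding square_integrable_def
  using D_int measurable_M[OF D_meas] by simp

lemma square_integrable_x: "square_integrable M (x s)"
proof (induction s)
  case (Suc s)
  then show ?case
    unfolding x_Suc[abs_def]
    by (intro square_integrable_diff square_integrable_scaleR square_integrable_sum
        square_integrable_const_M square_integrable_D) auto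
qed (simp add: x_0[abs_def] square_integrable_const_M)

lemma square_integrable_e: "i < n \<Longrightarrow> square_integrable M (e i s)"
proof (induction s)
  case (Suc s)
  then show ?case
    unfolding e_Suc[abs_def]
    by (intro square_integrable_diff square_integrable_add square_integrable_const_M
        square_integrable_D square_integrable_g)
qed (simp add: e_0[abs_def] square_integrable_const_M)

lemma square_integrable_virt_iter: "square_integrable M (virt_iter n \<gamma> x0 g s)"
proof (induction s)
  case (Suc s)
  then show ?case
    by (simp only: virt_iter.simps(2)[abs_def])
      (intro square_integrable_diff square_integrable_scaleR square_integrable_sum square_integrable_g; simp)
qed (simp add: square_integrable_const_M)

lemma square_integrable_grad: "i < n \<Longrightarrow> square_integrable M (\<lambda>w. dfi i (x s w))"
proof (rule square_integrable_affine_bound[OF finite_M square_integrable_diff[OF square_integrable_x square_integrable_const_M]])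
  assume i: "i < n"
  show "(\<lambda>w. dfi i (x s w)) \<in> borel_measurable M"
    using measurable_M[OF grad_measurable[OF i]] .
  fix w
  have "norm (dfi i (x s w)) \<le> norm (dfi i xs) + norm (dfi i (x s w) - dfi i xs)"
    by (rule norm_triangle_sub)
  also have "\<dots> \<le> norm (dfi i xs) + L * norm (x s w - xs)"
    using smooth[OF i] unfolding L_smooth_def by simp
  finally show "norm (dfi i (x s w)) \<le> norm (dfi i xs) + L * norm (x s w - xs)" .
qed

lemma square_integrable_df: "square_integrable M (\<lambda>w. df (x s w))"
  unfolding df_def
  by (intro square_integrable_scaleR square_integrable_sum square_integrable_grad) auto

lemma square_integrable_noise: "i < n \<Longrightarrow> square_integrable M (noise i s)"
  unfolding noise_def[abs_def]
  by (intro square_integrable_diff square_integrable_g square_integrable_grad)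

lemma noise_orthogonal:
  assumes "i < n" "square_integrable M U" "U \<in> borel_measurable (Fil s)"
  shows "integral\<^sup>L M (\<lambda>w. inner (noise i s w) (U w)) = 0"
  unfolding noise_def
  by (rule integral_inner_cond_unbiased_eq_0[OF finite_M sub_F square_integrable_g
        square_integrable_grad assms(2,3) unbiased]) (use assms in auto)

lemma noise_variance:
  assumes "i < n"
  shows "integral\<^sup>L M (\<lambda>w. (norm (noise i s w))\<^sup>2) \<le> \<sigma>\<^sup>2"
proof -
  have "integral\<^sup>L M (\<lambda>w. (norm (noise i s w))\<^sup>2) \<le> integral\<^sup>L M (\<lambda>w. \<sigma>\<^sup>2)"
  proof (rule integral_le_of_real_cond_exp_le[OF finite_M sub_F])
    show "integrable M (\<lambda>w. (norm (noise i s w))\<^sup>2)"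
      by (rule square_integrable_norm_squared[OF square_integrable_noise[OF assms]])
    show "AE w in M. real_cond_exp M (Fil s) (\<lambda>w. (norm (noise i s w))\<^sup>2) w \<le> \<sigma>\<^sup>2"
      using variance[OF assms] by (simp add: noise_def)
  qed (simp add: finite_measure.integrable_const[OF finite_M])
  then show ?thesis
    by simp
qed

lemma noise_uncorrelated:
  assumes "i < n" "j < n" "i \<noteq> j"
  shows "integral\<^sup>L M (\<lambda>w. inner (noise i s w) (noise j s w)) = 0"
proof (rule integral_eq_0_of_real_cond_exp_eq_0[OF finite_M sub_F])
  show "integrable M (\<lambda>w. inner (noise i s w) (noise j s w))"
    using assms by (intro square_integrable_inner square_integrable_noise)
  show "AE w in M. real_cond_exp M (Fil s) (\<lambda>w. inner (noise i s w) (noise j s w)) w = 0"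
    using uncorrelated[OF assms] by (simp add: noise_def)
qed

lemma square_integrable_mean_noise: "square_integrable M (mean_noise s)"
  unfolding mean_noise_def[abs_def]
  by (intro square_integrable_scaleR square_integrable_sum square_integrable_noise) auto

lemma mean_noise_variance: "integral\<^sup>L M (\<lambda>w. (norm (mean_noise s w))\<^sup>2) \<le> \<sigma>\<^sup>2 / real n"
  unfolding mean_noise_def
  by (rule integral_norm_average_squared_le[OF n square_integrable_noise noise_uncorrelated noise_variance])

lemma mean_noise_orthogonal:
  assumes "square_integrable M U" "U \<in> borel_measurable (Fil s)"
  shows "integral\<^sup>L M (\<lambda>w. inner (U w) (mean_noise s w)) = 0"
proof -
  have "integral\<^sup>L M (\<lambda>w. inner (U w) (mean_noise s w))
      = (1 / real n) * (\<Sum>i<n. integral\<^sup>L M (\<lambda>w. inner (noise i s w) (U w)))"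
    using square_integrable_inner[OF square_integrable_noise assms(1)]
    by (simp add: mean_noise_def inner_sum_right inner_commute Bochner_Integration.integral_sum)
  also have "\<dots> = 0"
    using noise_orthogonal[OF _ assms] by simp
  finally show ?thesis .
qed

lemma virt_iter_eq: "virt_iter n \<gamma> x0 g s w = x s w - \<gamma> *\<^sub>R ((1 / real n) *\<^sub>R (\<Sum>i<n. e i s w))"
proof (induction s)
  case (Suc s)
  have "virt_iter n \<gamma> x0 g (Suc s) w
      = x s w - \<gamma> *\<^sub>R ((1 / real n) *\<^sub>R (\<Sum>i<n. e i s w)) - (\<gamma> / real n) *\<^sub>R (\<Sum>i<n. g i s w)"
    using Suc by simp
  also have "\<dots> = x (Suc s) w - \<gamma> *\<^sub>R ((1 / real n) *\<^sub>R (\<Sum>i<n. e i (Suc s) w))"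
    unfolding x_Suc e_Suc hbar_def using n
    by (simp add: sum.distrib sum_subtractf scaleR_diff_right scaleR_add_right algebra_simps)
  finally show ?case .
qed (simp add: x_0 e_0)

lemma integrable_gap: "integrable M (\<lambda>w. f (x s w) - f xs)"
proof (rule Bochner_Integration.integrable_bound)
  show "integrable M (\<lambda>w. L / 2 * (norm (x s w - xs))\<^sup>2)"
    using square_integrable_norm_squared[OF square_integrable_diff[OF square_integrable_x
          square_integrable_const_M]] by simp
  show "(\<lambda>w. f (x s w) - f xs) \<in> borel_measurable M"
    by (intro borel_measurable_diff borel_measurable_const borel_measurable_continuous_on[OF
          L_smooth_continuous[OF f_L_smooth] measurable_M[OF x_measurable]])
  show "AE w in M. norm (f (x s w) - f xs) \<le> norm (L / 2 * (norm (x s w - xs))\<^sup>2)"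
  proof (rule AE_I2)
    fix w
    show "norm (f (x s w) - f xs) \<le> norm (L / 2 * (norm (x s w - xs))\<^sup>2)"
      using gap_le[of "x s w"] xs_min[of "x s w"] by simp
  qed
qed

lemma integrable_f_x: "integrable M (\<lambda>w. f (x s w))"
proof -
  have "integrable M (\<lambda>w. (f (x s w) - f xs) + f xs)"
    by (intro Bochner_Integration.integrable_add integrable_gap finite_measure.integrable_const[OF finite_M])
  then show ?thesis
    by simp
qed

lemma integral_gap: "integral\<^sup>L M (\<lambda>w. f (x s w) - f xs) = Ft s"
  unfolding Ft_def
  by (subst Bochner_Integration.integral_diff) (auto intro: integrable_f_x finite_measure.integrable_const[OF finite_M])

lemma Ft_nonneg: "0 \<le> Ft s"
  unfolding integral_gap[symmetric] using xs_min by (simp add: Bochner_Integration.integral_nonneg)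

lemma integral_average_error: "integral\<^sup>L M (\<lambda>w. (1 / real n) * (\<Sum>i<n. (norm (e i s w))\<^sup>2)) = Et s"
  unfolding Et_def
  using square_integrable_norm_squared[OF square_integrable_e] by (simp add: Bochner_Integration.integral_sum)

lemma Et_nonneg: "0 \<le> Et s"
  unfolding Et_def by (simp add: sum_nonneg)

lemma virt_iter_Suc:
  "virt_iter n \<gamma> x0 g (Suc s) w = virt_iter n \<gamma> x0 g s w - \<gamma> *\<^sub>R df (x s w) - \<gamma> *\<^sub>R mean_noise s w"
  unfolding mean_noise_def noise_def df_def
  by (simp add: sum_subtractf scaleR_diff_right algebra_simps)

lemma virtual_gradient_step_bound:
  "(norm (virt_iter n \<gamma> x0 g s w - \<gamma> *\<^sub>R df (x s w) - xs))\<^sup>2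
    \<le> (1 - \<gamma> * \<mu> / 2) * (norm (virt_iter n \<gamma> x0 g s w - xs))\<^sup>2 - \<gamma> * (1 - 2 * L * \<gamma>) * (f (x s w) - f xs)
      + 4 * L * \<gamma>^3 * ((1 / real n) * (\<Sum>i<n. (norm (e i s w))\<^sup>2))"
proof -
  define \<epsilon> where "\<epsilon> = - ((1 / real n) *\<^sub>R (\<Sum>i<n. e i s w))"
  have "(norm (virt_iter n \<gamma> x0 g s w - \<gamma> *\<^sub>R df (x s w) - xs))\<^sup>2
    \<le> (1 - \<gamma> * \<mu> / 2) * (norm (virt_iter n \<gamma> x0 g s w - xs))\<^sup>2 - \<gamma> * (1 - 2 * L * \<gamma>) * (f (x s w) - f xs)
      + 4 * L * \<gamma>^3 * (norm \<epsilon>)\<^sup>2"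
    by (rule perturbed_gradient_step_bound[OF _ quasi_convex_inner norm_df_squared_le])
      (use xs_min[of "x s w"] mu mu_le_2L gamma L in \<open>auto simp: virt_iter_eq \<epsilon>_def\<close>)
  moreover have "4 * L * \<gamma>^3 * (norm \<epsilon>)\<^sup>2 \<le> 4 * L * \<gamma>^3 * ((1 / real n) * (\<Sum>i<n. (norm (e i s w))\<^sup>2))"
    using norm_average_squared_le[OF n, of "\<lambda>i. e i s w"] L gamma
    unfolding \<epsilon>_def by (intro mult_left_mono) auto
  ultimately show ?thesis
    by linarith
qed

lemma integral_virtual_gradient_step_le:
  "integral\<^sup>L M (\<lambda>w. (norm (virt_iter n \<gamma> x0 g s w - \<gamma> *\<^sub>R df (x s w) - xs))\<^sup>2)
    \<le> (1 - \<gamma> * \<mu> / 2) * Xt s - \<gamma> * (1 - 2 * L * \<gamma>) * Ft s + 4 * L * \<gamma>^3 * Et s"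
proof -
  define dist where "dist = (\<lambda>w. (norm (virt_iter n \<gamma> x0 g s w - xs))\<^sup>2)"
  define gap where "gap = (\<lambda>w. f (x s w) - f xs)"
  define err where "err = (\<lambda>w. (1 / real n) * (\<Sum>i<n. (norm (e i s w))\<^sup>2))"
  have int_dist: "integrable M dist"
    unfolding dist_def
    by (intro square_integrable_norm_squared square_integrable_diff square_integrable_virt_iter
        square_integrable_const_M)
  have int_gap: "integrable M gap"
    unfolding gap_def by (rule integrable_gap)
  have int_err: "integrable M err"
    unfolding err_def
    by (intro integrable_mult_right Bochner_Integration.integrable_sum square_integrable_norm_squared
        square_integrable_e) auto
  have "integral\<^sup>L M (\<lambda>w. (norm (virt_iter n \<gamma> x0 g s w - \<gamma> *\<^sub>R df (x s w) - xs))\<^sup>2)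
      \<le> integral\<^sup>L M (\<lambda>w. (1 - \<gamma> * \<mu> / 2) * dist w - \<gamma> * (1 - 2 * L * \<gamma>) * gap w + 4 * L * \<gamma>^3 * err w)"
  proof (rule integral_mono)
    show "integrable M (\<lambda>w. (norm (virt_iter n \<gamma> x0 g s w - \<gamma> *\<^sub>R df (x s w) - xs))\<^sup>2)"
      by (intro square_integrable_norm_squared square_integrable_diff square_integrable_scaleR
          square_integrable_virt_iter square_integrable_df square_integrable_const_M)
    show "integrable M (\<lambda>w. (1 - \<gamma> * \<mu> / 2) * dist w - \<gamma> * (1 - 2 * L * \<gamma>) * gap w + 4 * L * \<gamma>^3 * err w)"
      by (intro Bochner_Integration.integrable_add Bochner_Integration.integrable_diff
          integrable_mult_right int_dist int_gap int_err)
    show "(norm (virt_iter n \<gamma> x0 g s w - \<gamma> *\<^sub>R df (x s w) - xs))\<^sup>2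
        \<le> (1 - \<gamma> * \<mu> / 2) * dist w - \<gamma> * (1 - 2 * L * \<gamma>) * gap w + 4 * L * \<gamma>^3 * err w" for w
      unfolding dist_def gap_def err_def by (rule virtual_gradient_step_bound)
  qed
  also have "\<dots> = (1 - \<gamma> * \<mu> / 2) * Xt s - \<gamma> * (1 - 2 * L * \<gamma>) * Ft s + 4 * L * \<gamma>^3 * Et s"
  proof -
    have "integral\<^sup>L M err = Et s"
      unfolding err_def by (rule integral_average_error)
    moreover have "integral\<^sup>L M gap = Ft s"
      unfolding gap_def by (rule integral_gap)
    moreover have "integral\<^sup>L M dist = Xt s"
      unfolding dist_def Xt_def ..
    ultimately show ?thesis
      using int_dist int_gap int_err by simp
  qed
  finally show ?thesis .
qed

lemma Xt_step:
  "Xt (Suc s) \<le> (1 - \<gamma> * \<mu> / 2) * Xt s - \<gamma> * (1 - 2 * L * \<gamma>) * Ft s + 4 * L * \<gamma>^3 * Et s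
    + \<gamma>\<^sup>2 * \<sigma>\<^sup>2 / real n"
proof -
  define A where "A = (\<lambda>w. virt_iter n \<gamma> x0 g s w - \<gamma> *\<^sub>R df (x s w) - xs)"
  have sq_int_A: "square_integrable M A"
    unfolding A_def
    by (intro square_integrable_diff square_integrable_scaleR square_integrable_virt_iter
        square_integrable_df square_integrable_const_M)
  have A_meas: "A \<in> borel_measurable (Fil s)"
    unfolding A_def
    by (intro borel_measurable_diff borel_measurable_scaleR borel_measurable_const
        virt_iter_measurable df_measurable)
  have "(norm (virt_iter n \<gamma> x0 g (Suc s) w - xs))\<^sup>2
      = (norm (A w))\<^sup>2 - 2 * \<gamma> * inner (A w) (mean_noise s w) + \<gamma>\<^sup>2 * (norm (mean_noise s w))\<^sup>2" for w
    unfolding virt_iter_Suc A_def power2_norm_eq_inner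
    by (simp add: inner_diff_left inner_diff_right inner_commute power2_eq_square algebra_simps)
  then have "Xt (Suc s) = integral\<^sup>L M (\<lambda>w. (norm (A w))\<^sup>2)
      - 2 * \<gamma> * integral\<^sup>L M (\<lambda>w. inner (A w) (mean_noise s w))
      + \<gamma>\<^sup>2 * integral\<^sup>L M (\<lambda>w. (norm (mean_noise s w))\<^sup>2)"
    unfolding Xt_def
    using square_integrable_norm_squared[OF sq_int_A]
      square_integrable_norm_squared[OF square_integrable_mean_noise]
      square_integrable_inner[OF sq_int_A square_integrable_mean_noise]
    by simp
  also have "\<dots> \<le> integral\<^sup>L M (\<lambda>w. (norm (A w))\<^sup>2) + \<gamma>\<^sup>2 * (\<sigma>\<^sup>2 / real n)"
    using mean_noise_orthogonal[OF sq_int_A A_meas] mult_left_mono[OF mean_noise_variance[of s], of "\<gamma>\<^sup>2"]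
    by simp
  also have "\<dots> \<le> (1 - \<gamma> * \<mu> / 2) * Xt s - \<gamma> * (1 - 2 * L * \<gamma>) * Ft s + 4 * L * \<gamma>^3 * Et s
      + \<gamma>\<^sup>2 * (\<sigma>\<^sup>2 / real n)"
    using integral_virtual_gradient_step_le[of s] unfolding A_def by simp
  finally show ?thesis
    by simp
qed

lemma error_Suc_le_compressed:
  assumes i: "i < n"
  shows "integral\<^sup>L M (\<lambda>w. (norm (e i (Suc s) w))\<^sup>2)
    \<le> integral\<^sup>L M (\<lambda>w. (1 - \<delta>) * (norm (e i s w + g i s w - h i))\<^sup>2)"
proof (rule integral_le_of_real_cond_exp_le[OF finite_M sub_G])
  have "square_integrable M (\<lambda>w. e i s w + g i s w - h i)"
    by (intro square_integrable_diff square_integrable_add square_integrable_e square_integrable_g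
        square_integrable_const_M i)
  then show "integrable M (\<lambda>w. (1 - \<delta>) * (norm (e i s w + g i s w - h i))\<^sup>2)"
    by (intro integrable_mult_right square_integrable_norm_squared)
  show "integrable M (\<lambda>w. (norm (e i (Suc s) w))\<^sup>2)"
    by (rule square_integrable_norm_squared[OF square_integrable_e[OF i]])
  show "AE w in M. real_cond_exp M (G s) (\<lambda>w. (norm (e i (Suc s) w))\<^sup>2) w
      \<le> (1 - \<delta>) * (norm (e i s w + g i s w - h i))\<^sup>2"
    using compressor[OF i, of s] unfolding e_Suc by (simp add: norm_minus_commute)
qed

lemma error_step_client:
  assumes i: "i < n"
  shows "integral\<^sup>L M (\<lambda>w. (norm (e i (Suc s) w))\<^sup>2)
    \<le> (1 - \<delta> / 2) * integral\<^sup>L M (\<lambda>w. (norm (e i s w))\<^sup>2)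
      + (2 / \<delta>) * integral\<^sup>L M (\<lambda>w. (norm (dfi i (x s w) - h i))\<^sup>2) + \<sigma>\<^sup>2"
proof -
  define q where "q = (\<lambda>w. e i s w + g i s w - h i)"
  define k where "k = (\<lambda>w. dfi i (x s w) - h i)"
  have sq_int_q: "square_integrable M q"
    unfolding q_def by (intro square_integrable_diff square_integrable_add square_integrable_e
        square_integrable_g square_integrable_const_M i)
  have sq_int_k: "square_integrable M k"
    unfolding k_def by (intro square_integrable_diff square_integrable_grad square_integrable_const_M i)
  have sq_int_ek: "square_integrable M (\<lambda>w. e i s w + k w)"
    by (intro square_integrable_add square_integrable_e sq_int_k i)
  have ek_meas: "(\<lambda>w. e i s w + k w) \<in> borel_measurable (Fil s)"
    unfolding k_def using e_measurable[OF i] grad_measurable[OF i] by measurable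
  note ints = square_integrable_norm_squared[OF square_integrable_e[OF i]]
    square_integrable_norm_squared[OF sq_int_k] square_integrable_inner[OF sq_int_ek square_integrable_noise[OF i]]
    square_integrable_norm_squared[OF square_integrable_noise[OF i]]
  have "integral\<^sup>L M (\<lambda>w. (norm (e i (Suc s) w))\<^sup>2) \<le> integral\<^sup>L M (\<lambda>w. (1 - \<delta>) * (norm (q w))\<^sup>2)"
    unfolding q_def by (rule error_Suc_le_compressed[OF i])
  also have "\<dots> \<le> integral\<^sup>L M (\<lambda>w. (1 - \<delta> / 2) * (norm (e i s w))\<^sup>2 + (2 / \<delta>) * (norm (k w))\<^sup>2
      + 2 * (1 - \<delta>) * inner (e i s w + k w) (noise i s w) + (norm (noise i s w))\<^sup>2)"
  proof (rule integral_mono)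
    show "integrable M (\<lambda>w. (1 - \<delta>) * (norm (q w))\<^sup>2)"
      using square_integrable_norm_squared[OF sq_int_q] by simp
    show "integrable M (\<lambda>w. (1 - \<delta> / 2) * (norm (e i s w))\<^sup>2 + (2 / \<delta>) * (norm (k w))\<^sup>2
        + 2 * (1 - \<delta>) * inner (e i s w + k w) (noise i s w) + (norm (noise i s w))\<^sup>2)"
      using ints by simp
    fix w
    have "q w = e i s w + k w + noise i s w"
      unfolding q_def k_def noise_def by simp
    then show "(1 - \<delta>) * (norm (q w))\<^sup>2 \<le> (1 - \<delta> / 2) * (norm (e i s w))\<^sup>2 + (2 / \<delta>) * (norm (k w))\<^sup>2
        + 2 * (1 - \<delta>) * inner (e i s w + k w) (noise i s w) + (norm (noise i s w))\<^sup>2"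
      using compressed_error_bound[OF delta] by simp
  qed
  also have "\<dots> = (1 - \<delta> / 2) * integral\<^sup>L M (\<lambda>w. (norm (e i s w))\<^sup>2) + (2 / \<delta>) * integral\<^sup>L M (\<lambda>w. (norm (k w))\<^sup>2)
      + 2 * (1 - \<delta>) * integral\<^sup>L M (\<lambda>w. inner (e i s w + k w) (noise i s w))
      + integral\<^sup>L M (\<lambda>w. (norm (noise i s w))\<^sup>2)"
    using ints by simp
  also have "\<dots> \<le> (1 - \<delta> / 2) * integral\<^sup>L M (\<lambda>w. (norm (e i s w))\<^sup>2) + (2 / \<delta>) * integral\<^sup>L M (\<lambda>w. (norm (k w))\<^sup>2)
      + \<sigma>\<^sup>2"
    using noise_orthogonal[OF i sq_int_ek ek_meas] noise_variance[OF i, of s]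
    by (simp add: inner_commute)
  finally show ?thesis
    unfolding k_def .
qed

lemma average_shifted_gradient_le:
  "(1 / real n) * (\<Sum>i<n. (norm (dfi i y - h i))\<^sup>2) \<le> 4 * L * (f y - f xs) + 2 * \<alpha>"
proof -
  have "(norm (dfi i y - h i))\<^sup>2 \<le> 2 * (norm (dfi i y - dfi i xs))\<^sup>2 + 2 * (norm (h i - dfi i xs))\<^sup>2" for i
    using norm_add_squared_le[of 1 "dfi i y - dfi i xs" "dfi i xs - h i"]
    by (simp add: norm_minus_commute)
  then have "(1 / real n) * (\<Sum>i<n. (norm (dfi i y - h i))\<^sup>2)
      \<le> (1 / real n) * (\<Sum>i<n. 2 * (norm (dfi i y - dfi i xs))\<^sup>2 + 2 * (norm (h i - dfi i xs))\<^sup>2)"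
    by (intro mult_left_mono sum_mono) auto
  also have "\<dots> = 2 * ((1 / real n) * (\<Sum>i<n. (norm (dfi i y - dfi i xs))\<^sup>2))
      + 2 * ((1 / real n) * (\<Sum>i<n. (norm (h i - dfi i xs))\<^sup>2))"
    by (simp add: sum.distrib sum_distrib_left algebra_simps)
  also have "\<dots> \<le> 4 * L * (f y - f xs) + 2 * \<alpha>"
    using average_gradient_diff_le[of y] h_alpha by simp
  finally show ?thesis .
qed

lemma Et_step: "Et (Suc s) \<le> (1 - \<delta> / 2) * Et s + (2 / \<delta>) * (4 * L * Ft s + 2 * \<alpha>) + \<sigma>\<^sup>2"
proof -
  define K where "K = (1 / real n) * (\<Sum>i<n. integral\<^sup>L M (\<lambda>w. (norm (dfi i (x s w) - h i))\<^sup>2))"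
  have int_K: "integrable M (\<lambda>w. (norm (dfi i (x s w) - h i))\<^sup>2)" if "i < n" for i
    using that by (intro square_integrable_norm_squared square_integrable_diff square_integrable_grad
        square_integrable_const_M)
  have "Et (Suc s) \<le> (1 / real n) * (\<Sum>i<n. (1 - \<delta> / 2) * integral\<^sup>L M (\<lambda>w. (norm (e i s w))\<^sup>2)
      + (2 / \<delta>) * integral\<^sup>L M (\<lambda>w. (norm (dfi i (x s w) - h i))\<^sup>2) + \<sigma>\<^sup>2)"
    unfolding Et_def by (intro mult_left_mono sum_mono error_step_client) auto
  also have "\<dots> = (1 - \<delta> / 2) * Et s + (2 / \<delta>) * K + \<sigma>\<^sup>2"
  proof -
    have "(\<Sum>i<n. (1 - \<delta> / 2) * integral\<^sup>L M (\<lambda>w. (norm (e i s w))\<^sup>2)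
        + (2 / \<delta>) * integral\<^sup>L M (\<lambda>w. (norm (dfi i (x s w) - h i))\<^sup>2) + \<sigma>\<^sup>2)
      = (1 - \<delta> / 2) * (\<Sum>i<n. integral\<^sup>L M (\<lambda>w. (norm (e i s w))\<^sup>2))
        + (2 / \<delta>) * (\<Sum>i<n. integral\<^sup>L M (\<lambda>w. (norm (dfi i (x s w) - h i))\<^sup>2)) + real n * \<sigma>\<^sup>2"
      by (simp add: sum.distrib sum_distrib_left)
    then show ?thesis
      unfolding Et_def K_def using n by (simp add: field_simps)
  qed
  also have "K \<le> 4 * L * Ft s + 2 * \<alpha>"
  proof -
    have "K = integral\<^sup>L M (\<lambda>w. (1 / real n) * (\<Sum>i<n. (norm (dfi i (x s w) - h i))\<^sup>2))"
      unfolding K_def using int_K by (simp add: Bochner_Integration.integral_sum)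
    also have "\<dots> \<le> integral\<^sup>L M (\<lambda>w. 4 * L * (f (x s w) - f xs) + 2 * \<alpha>)"
      using int_K integrable_f_x average_shifted_gradient_le
      by (intro integral_mono) (auto intro!: Bochner_Integration.integrable_sum
          simp: finite_measure.integrable_const[OF finite_M])
    also have "\<dots> = 4 * L * integral\<^sup>L M (\<lambda>w. f (x s w) - f xs) + 2 * \<alpha>"
      by (subst Bochner_Integration.integral_add)
        (auto intro: integrable_gap finite_measure.integrable_const[OF finite_M])
    also have "\<dots> = 4 * L * Ft s + 2 * \<alpha>"
      by (simp only: integral_gap)
    finally show ?thesis .
  qed
  then have "(2 / \<delta>) * K \<le> (2 / \<delta>) * (4 * L * Ft s + 2 * \<alpha>)"
    using delta by (intro mult_left_mono) auto
  finally show ?thesis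
    by simp
qed

lemma lyapunov_step:
  "Xt (Suc s) + 12 * L * \<gamma>^3 / \<delta> * Et (Suc s)
    \<le> (1 - \<gamma> * \<mu> / 2) * (Xt s + 12 * L * \<gamma>^3 / \<delta> * Et s) - \<gamma> / 4 * Ft s
      + \<gamma>\<^sup>2 * \<sigma>\<^sup>2 / real n + \<gamma>^3 * (48 * L * \<alpha> / \<delta>\<^sup>2 + 12 * L * \<sigma>\<^sup>2 / \<delta>)"
  using L delta gamma n mu mu_le_2L Et_nonneg Ft_nonneg Xt_step Et_step
  by (intro lyapunov_step_arith) auto

end

theorem lemma14:
  fixes M :: "'w measure" and Fil G :: "nat \<Rightarrow> 'w measure"
    and n :: nat
    and fi :: "nat \<Rightarrow> 'a::euclidean_space \<Rightarrow> real" and dfi :: "nat \<Rightarrow> 'a \<Rightarrow> 'a"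
    and L \<mu> \<sigma> \<delta> \<gamma> \<alpha> :: real
    and xs x0 :: 'a and h :: "nat \<Rightarrow> 'a"
    and x :: "nat \<Rightarrow> 'w \<Rightarrow> 'a"
    and e g D :: "nat \<Rightarrow> nat \<Rightarrow> 'w \<Rightarrow> 'a"
    and t :: nat
  defines "f \<equiv> (\<lambda>y. (1 / real n) * (\<Sum>i<n. fi i y))"
    and "df \<equiv> (\<lambda>y. (1 / real n) *\<^sub>R (\<Sum>i<n. dfi i y))"
    and "hbar \<equiv> (1 / real n) *\<^sub>R (\<Sum>i<n. h i)"
  assumes M: "prob_space M"
    and n: "n \<ge> 1"
    and L: "L > 0" and mu: "\<mu> > 0"
    and delta: "0 < \<delta>" "\<delta> \<le> 1"
    and gamma: "0 < \<gamma>" "\<gamma> \<le> \<delta> / (8 * sqrt 6 * L)"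
    and smooth: "\<And>i. i < n \<Longrightarrow> L_smooth L (fi i) (dfi i)"
    and conv: "\<And>i. i < n \<Longrightarrow> convex_on UNIV (fi i)"
    and sqc: "strongly_quasi_convex_around \<mu> f df xs"
    and xs_min: "\<And>y. f xs \<le> f y"
    and h_alpha: "(1 / real n) * (\<Sum>i<n. (norm (h i - dfi i xs))\<^sup>2) \<le> \<alpha>"
    (* filtration: Fil s = information before iteration s; G s additionally contains the
       stochastic gradients of iteration s (but not the compressor randomness) *)
    and sub_F: "\<And>s. subalgebra M (Fil s)"
    and sub_G: "\<And>s. subalgebra M (G s)"
    and F_G: "\<And>s. sets (Fil s) \<subseteq> sets (G s)"
    and G_F: "\<And>s. sets (G s) \<subseteq> sets (Fil (Suc s))"
    and g_meas: "\<And>i s. i < n \<Longrightarrow> g i s \<in> borel_measurable (G s)"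
    and D_meas: "\<And>i s. i < n \<Longrightarrow> D i s \<in> borel_measurable (Fil (Suc s))"
    and g_int: "\<And>i s. i < n \<Longrightarrow> integrable M (\<lambda>w. (norm (g i s w))\<^sup>2)"
    and D_int: "\<And>i s. i < n \<Longrightarrow> integrable M (\<lambda>w. (norm (D i s w))\<^sup>2)"
    (* EC-Approximate *)
    and x_0: "\<And>w. x 0 w = x0"
    and x_Suc: "\<And>s w. x (Suc s) w = x s w - \<gamma> *\<^sub>R hbar - (\<gamma> / real n) *\<^sub>R (\<Sum>i<n. D i s w)"
    and e_0: "\<And>i w. e i 0 w = 0"
    and e_Suc: "\<And>i s w. e i (Suc s) w = e i s w + g i s w - h i - D i s w"
    (* stochastic gradient oracle *)
    and unbiased: "\<And>i s v. i < n \<Longrightarrow>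
       AE w in M. real_cond_exp M (Fil s) (\<lambda>w. inner (g i s w) v) w = inner (dfi i (x s w)) v"
    and variance: "\<And>i s. i < n \<Longrightarrow>
       AE w in M. real_cond_exp M (Fil s) (\<lambda>w. (norm (g i s w - dfi i (x s w)))\<^sup>2) w \<le> \<sigma>\<^sup>2"
    and uncorrelated: "\<And>i j s. i < n \<Longrightarrow> j < n \<Longrightarrow> i \<noteq> j \<Longrightarrow>
       AE w in M. real_cond_exp M (Fil s)
         (\<lambda>w. inner (g i s w - dfi i (x s w)) (g j s w - dfi j (x s w))) w = 0"
    (* contractive compressor with fresh randomness *)
    and compressor: "\<And>i s. i < n \<Longrightarrow>
       AE w in M. real_cond_exp M (G s)
         (\<lambda>w. (norm (D i s w - (e i s w + g i s w - h i)))\<^sup>2) w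
         \<le> (1 - \<delta>) * (norm (e i s w + g i s w - h i))\<^sup>2"
  shows
    "let Ft = (\<lambda>s. integral\<^sup>L M (\<lambda>w. f (x s w)) - f xs);
         Et = (\<lambda>s. (1 / real n) * (\<Sum>i<n. integral\<^sup>L M (\<lambda>w. (norm (e i s w))\<^sup>2)));
         Xt = (\<lambda>s. integral\<^sup>L M (\<lambda>w. (norm (virt_iter n \<gamma> x0 g s w - xs))\<^sup>2));
         a = 12 * L * \<gamma>^3 / \<delta>;
         c = \<gamma> * \<mu> / 2;
         \<Psi> = (\<lambda>s. Xt s + a * Et s)
     in \<Psi> (Suc t) \<le> (1 - c) * \<Psi> t - \<gamma> / 4 * Ft t + \<gamma>\<^sup>2 * \<sigma>\<^sup>2 / real n
          + \<gamma>^3 * (48 * L * \<alpha> / \<delta>\<^sup>2 + 12 * L * \<sigma>\<^sup>2 / \<delta>)"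
proof -
  interpret ec_approximate n fi dfi L \<mu> xs f df M Fil G \<sigma> \<delta> \<gamma> \<alpha> x0 h hbar x e g D
    by (intro ec_approximate.intro smooth_convex_sum.intro ec_approximate_axioms.intro)
      (use assms in \<open>simp_all add: f_def df_def hbar_def\<close>)
  show ?thesis
    using lyapunov_step[of t] unfolding Let_def Xt_def Et_def Ft_def .
qed

end
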